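(* Fix $T\ge1$ and $\delta\in(0,1)$ and run Variation-aware UCRL with confidence parameter $\delta$ and variation parameters $\tilde V^r=V^r_T$, $\tilde V^p=V^p_T$. For a step $t\le T$, let $\mathcal M(t)$ be the set of MDPs with rewards $\tilde r$ and transition probabilities $\tilde p$ such that for all $(s,a)$: $|\tilde r(s,a)-\hat r_t(s,a)|\le V^r_T+\sqrt{8\log(8SAt^3/\delta)/\max(1,N_t(s,a))}$ and $\|\tilde p(\cdot\mid s,a)-\hat p_t(\cdot\mid s,a)\|_1\le V^p_T+\sqrt{8S\log(8SAt^3/\delta)/\max(1,N_t(s,a))}$. Then with probability at least $1-\frac{5\delta}{6}$, for every $t=1,\dots,T$ the set $\mathcal M(t)$ contains all MDPs $M_\tau$, $\tau=1,\dots,T$.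
   Context: Let $\mathcal S$ be a finite set of $S$ states and $\mathcal A$ a finite set of $A$ actions. Changing environment: for every step $t$ there is an MDP $M_t=(\mathcal S,\mathcal A,\bar r_t,p_t,s_1)$ (fixed in advance). At step $t$, in state $s_t$, the learner chooses $a_t$, receives a random reward $r_t\in[0,1]$ with mean $\bar r_t(s_t,a_t)$, and moves to $s_{t+1}\sim p_t(\cdot\mid s_t,a_t)$. Variations: $V^r_T=\sum_{t=1}^{T-1}\max_{s,a}|\bar r_{t+1}(s,a)-\bar r_t(s,a)|$, $V^p_T=\sum_{t=1}^{T-1}\max_{s,a}\|p_{t+1}(\cdot\mid s,a)-p_t(\cdot\mid s,a)\|_1$. For a step $t$, $N_t(s,a)$ is the number of steps $\tau<t$ with $(s_\tau,a_\tau)=(s,a)$, $\hat r_t(s,a)=\sum_{\tau<t}r_\tau\mathbb 1\{s_\tau=s,a_\tau=a\}/\max(1,N_t(s,a))$ and $\hat p_t(s'\mid s,a)=\#\{\tau<t:s_\tau=s,a_\tau=a,s_{\tau+1}=s'\}/\max(1,N_t(s,a))$. Variation-aware UCRL (inputs $\delta$, $\tilde V^r,\tilde V^p\ge0$) proceeds in episodes $k=1,2,\dots$ starting at steps $t_k$ ($t_1=1$). With $N_k:=N_{t_k}$, $\hat r_k:=\hat r_{t_k}$, $\hat p_k:=\hat p_{t_k}$ and $v_k(s,a)$ the number of visits of $(s,a)$ within episode $k$, the plausible set $\mathcal M_k$ consists of all MDPs satisfying $|\tilde r(s,a)-\hat r_k(s,a)|\le\tilde V^r+\sqrt{8\log(8SAt_k^3/\delta)/\max(1,N_k(s,a))}$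 and $\|\tilde p(\cdot\mid s,a)-\hat p_k(\cdot\mid s,a)\|_1\le\tilde V^p+\sqrt{8S\log(8SAt_k^3/\delta)/\max(1,N_k(s,a))}$ for all $(s,a)$. The algorithm computes a stationary policy $\tilde\pi_k$ and $\tilde M_k\in\mathcal M_k$ with $\rho(\tilde M_k,\tilde\pi_k)=\max_{M'\in\mathcal M_k}\rho^*(M')$ (where $\rho^*$ is the optimal long-run average reward), and plays $a_t=\tilde\pi_k(s_t)$ as long as $v_k(s_t,\tilde\pi_k(s_t))<\max(1,N_k(s_t,\tilde\pi_k(s_t)))$; when this fails a new episode begins. *)

theory Defs
  imports "HOL-Probability.Probability"
begin

text \<open>Trajectory of the learner: on a probability space M, step t (t \<ge> 1) has
  state s t, action a t and reward r t.\<close>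

definition hist_alg ::
  "'w measure \<Rightarrow> (nat \<Rightarrow> 'w \<Rightarrow> 's) \<Rightarrow> (nat \<Rightarrow> 'w \<Rightarrow> 'a) \<Rightarrow> (nat \<Rightarrow> 'w \<Rightarrow> real) \<Rightarrow> nat \<Rightarrow> 'w measure"
where
  "hist_alg M s a r t = sigma (space M)
     ({{\<omega> \<in> space M. s \<tau> \<omega> = x} | \<tau> x. 1 \<le> \<tau> \<and> \<tau> \<le> t}
      \<union> {{\<omega> \<in> space M. a \<tau> \<omega> = y} | \<tau> y. 1 \<le> \<tau> \<and> \<tau> < t}
      \<union> {{\<omega> \<in> space M. r \<tau> \<omega> \<in> B} | \<tau> B. 1 \<le> \<tau> \<and> \<tau> < t \<and> B \<in> sets borel})"

definition visit_count ::
  "(nat \<Rightarrow> 'w \<Rightarrow> 's) \<Rightarrow> (nat \<Rightarrow> 'w \<Rightarrow> 'a) \<Rightarrow> nat \<Rightarrow> 'w \<Rightarrow> 's \<Rightarrow> 'a \<Rightarrow> nat"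
where
  "visit_count s a t \<omega> x y = card {\<tau> \<in> {1..<t}. s \<tau> \<omega> = x \<and> a \<tau> \<omega> = y}"

definition emp_reward ::
  "(nat \<Rightarrow> 'w \<Rightarrow> 's) \<Rightarrow> (nat \<Rightarrow> 'w \<Rightarrow> 'a) \<Rightarrow> (nat \<Rightarrow> 'w \<Rightarrow> real) \<Rightarrow> nat \<Rightarrow> 'w \<Rightarrow> 's \<Rightarrow> 'a \<Rightarrow> real"
where
  "emp_reward s a r t \<omega> x y =
     (\<Sum>\<tau> \<in> {\<tau> \<in> {1..<t}. s \<tau> \<omega> = x \<and> a \<tau> \<omega> = y}. r \<tau> \<omega>)
       / max 1 (real (visit_count s a t \<omega> x y))"

definition emp_trans ::
  "(nat \<Rightarrow> 'w \<Rightarrow> 's) \<Rightarrow> (nat \<Rightarrow> 'w \<Rightarrow> 'a) \<Rightarrow> nat \<Rightarrow> 'w \<Rightarrow> 's \<Rightarrow> 'a \<Rightarrow> 's \<Rightarrow> real"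
where
  "emp_trans s a t \<omega> x y x' =
     real (card {\<tau> \<in> {1..<t}. s \<tau> \<omega> = x \<and> a \<tau> \<omega> = y \<and> s (Suc \<tau>) \<omega> = x'})
       / max 1 (real (visit_count s a t \<omega> x y))"

definition reward_variation :: "(nat \<Rightarrow> 's::finite \<Rightarrow> 'a::finite \<Rightarrow> real) \<Rightarrow> nat \<Rightarrow> real" where
  "reward_variation rbar T =
     (\<Sum>t \<in> {1..<T}. Max ((\<lambda>(x, y). \<bar>rbar (Suc t) x y - rbar t x y\<bar>) ` UNIV))"

definition trans_variation :: "(nat \<Rightarrow> 's::finite \<Rightarrow> 'a::finite \<Rightarrow> 's pmf) \<Rightarrow> nat \<Rightarrow> real" where
  "trans_variation p T =
     (\<Sum>t \<in> {1..<T}. Max ((\<lambda>(x, y). \<Sum>x'\<in>UNIV. \<bar>pmf (p (Suc t) x y) x' - pmf (p t x y) x'\<bar>) ` UNIV))"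

definition in_plausible ::
  "real \<Rightarrow> real \<Rightarrow> real \<Rightarrow> (nat \<Rightarrow> 'w \<Rightarrow> 's::finite) \<Rightarrow> (nat \<Rightarrow> 'w \<Rightarrow> 'a::finite) \<Rightarrow> (nat \<Rightarrow> 'w \<Rightarrow> real)
    \<Rightarrow> nat \<Rightarrow> 'w \<Rightarrow> ('s \<Rightarrow> 'a \<Rightarrow> real) \<Rightarrow> ('s \<Rightarrow> 'a \<Rightarrow> 's pmf) \<Rightarrow> bool"
where
  "in_plausible \<delta> Vr Vp s a r t \<omega> rt pt \<longleftrightarrow>
     (\<forall>x y.
        \<bar>rt x y - emp_reward s a r t \<omega> x y\<bar>
          \<le> Vr + sqrt (8 * ln (8 * real CARD('s) * real CARD('a) * real t ^ 3 / \<delta>)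
                        / max 1 (real (visit_count s a t \<omega> x y)))
      \<and> (\<Sum>x'\<in>UNIV. \<bar>pmf (pt x y) x' - emp_trans s a t \<omega> x y x'\<bar>)
          \<le> Vp + sqrt (8 * real CARD('s) * ln (8 * real CARD('s) * real CARD('a) * real t ^ 3 / \<delta>)
                        / max 1 (real (visit_count s a t \<omega> x y))))"

end

theory Submission
  imports Defs "HOL-Probability.Hoeffding"
begin

(* For a fixed state-action pair (x, y), the reward deviations r_k - rbar_k(x, y) and the
   deviations of the next-state indicators from p_k(. | x, y), taken at the steps where (x, y)
   is visited, are bounded martingale differences for the history filtration, and the visit
   indicator is predictable. An exponential supermartingale (Azuma-Hoeffding with a random
   number of samples) bounds the probability that after n visits their sum exceeds n times the
   confidence width; for transitions, the l1 norm is the maximum over the 2^S sign patterns.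
   With the chosen widths every such event has probability at most delta / (2 S A t^3), so the
   union over t <= T, (x, y) and n < t has probability at most delta / 2, as
   sum_t (t - 1) / t^3 <= 1. Outside this union the empirical estimates are within the
   confidence width of the average of the true means over the visits, and by telescoping every
   M_tau differs from each M_k, k <= T, by at most V^r_T in rewards and V^p_T in transitions. *)

section \<open>Exponential moments and conditional means\<close>

lemma cosh_le_exp_half_square: "cosh (x::real) \<le> exp (x\<^sup>2 / 2)"
proof -
  have nonneg: "cosh x \<le> exp (x\<^sup>2 / 2)" if "x \<ge> 0" for x :: real
  proof -
    have "-(2*x) * (1/2) + ln (1 + (1/2) * (exp (2*x) - 1)) \<le> (2*x)\<^sup>2 / 8"
      using Hoeffdings_lemma_aux[of "2*x" "1/2"] that by simp
    then have "ln ((1 + exp (2*x)) / 2) \<le> x + x\<^sup>2 / 2"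
      by (simp add: power2_eq_square field_simps)
    then have "(1 + exp (2*x)) / 2 \<le> exp (x + x\<^sup>2 / 2)"
      by (metis add_pos_pos divide_pos_pos exp_gt_zero exp_le_cancel_iff exp_ln zero_less_one zero_less_numeral)
    then have "exp (-x) * ((1 + exp (2*x)) / 2) \<le> exp (-x) * exp (x + x\<^sup>2 / 2)"
      by simp
    moreover have "exp (-x) * ((1 + exp (2*x)) / 2) = cosh x"
      by (simp add: cosh_def field_simps flip: exp_add)
    ultimately show ?thesis
      by (simp flip: exp_add)
  qed
  show ?thesis
    using nonneg[of x] nonneg[of "-x"] by (cases "x \<ge> 0") simp_all
qed

lemma exp_le_cosh_plus_sinh:
  fixes l d c :: real
  assumes "0 < c" and "\<bar>d\<bar> \<le> c"
  shows "exp (l * d) \<le> cosh (l * c) + d / c * sinh (l * c)"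
proof -
  define \<theta> where "\<theta> = (c + d) / (2 * c)"
  have \<theta>: "0 \<le> \<theta>" "\<theta> \<le> 1"
    using assms by (auto simp: \<theta>_def field_simps)
  have "convex_on UNIV exp"
    using convex_on_exp[of 1] by simp
  then have "exp ((1 - \<theta>) * (-(l*c)) + \<theta> * (l*c)) \<le> (1 - \<theta>) * exp (-(l*c)) + \<theta> * exp (l*c)"
    using convex_onD[of UNIV exp \<theta> "-(l*c)" "l*c"] \<theta> by simp
  moreover have "(1 - \<theta>) * (-(l*c)) + \<theta> * (l*c) = l * d"
    using assms by (simp add: \<theta>_def field_simps)
  moreover have "(1 - \<theta>) * exp (-(l*c)) + \<theta> * exp (l*c) = cosh (l*c) + d / c * sinh (l*c)"
    using assms by (simp add: \<theta>_def cosh_def sinh_def field_simps)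
  ultimately show ?thesis
    by simp
qed

text \<open>The one-step estimate behind the exponential supermartingale of Azuma's inequality: the
  right-hand side is affine in \<open>d\<close>, so its conditional mean is \<open>1\<close> when \<open>d\<close> has conditional
  mean zero.\<close>
lemma exp_increment_le:
  fixes l d c :: real
  assumes "0 < c" and "\<bar>d\<bar> \<le> c"
  shows "exp (l * d - l\<^sup>2 * c\<^sup>2 / 2) \<le> 1 + exp (- (l\<^sup>2 * c\<^sup>2 / 2)) * sinh (l * c) / c * d"
proof -
  have "exp (- (l\<^sup>2 * c\<^sup>2 / 2)) * cosh (l * c) \<le> exp (- (l\<^sup>2 * c\<^sup>2 / 2)) * exp ((l * c)\<^sup>2 / 2)"
    using cosh_le_exp_half_square by simp
  also have "\<dots> = 1"
    by (simp add: power_mult_distrib flip: exp_add)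
  finally have cosh: "exp (- (l\<^sup>2 * c\<^sup>2 / 2)) * cosh (l * c) \<le> 1" .
  have "exp (l * d - l\<^sup>2 * c\<^sup>2 / 2) = exp (- (l\<^sup>2 * c\<^sup>2 / 2)) * exp (l * d)"
    by (simp flip: exp_add)
  also have "\<dots> \<le> exp (- (l\<^sup>2 * c\<^sup>2 / 2)) * (cosh (l * c) + d / c * sinh (l * c))"
    using exp_le_cosh_plus_sinh[OF assms] by simp
  also have "\<dots> \<le> 1 + exp (- (l\<^sup>2 * c\<^sup>2 / 2)) * sinh (l * c) / c * d"
    using cosh by (simp add: algebra_simps)
  finally show ?thesis .
qed

lemma integrable_bounded_mult:
  fixes f g :: "'w \<Rightarrow> real"
  assumes "integrable M f" and "g \<in> borel_measurable M" and "\<And>\<omega>. \<omega> \<in> space M \<Longrightarrow> \<bar>g \<omega>\<bar> \<le> B"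
  shows "integrable M (\<lambda>\<omega>. g \<omega> * f \<omega>)"
proof -
  have "AE \<omega> in M. norm (g \<omega> * f \<omega>) \<le> norm (B * f \<omega>)"
  proof (rule AE_I2)
    fix \<omega> assume "\<omega> \<in> space M"
    with assms(3) have "\<bar>g \<omega>\<bar> \<le> \<bar>B\<bar>" by force
    then show "norm (g \<omega> * f \<omega>) \<le> norm (B * f \<omega>)"
      by (simp add: abs_mult mult_right_mono)
  qed
  moreover have "(\<lambda>\<omega>. g \<omega> * f \<omega>) \<in> borel_measurable M"
    using assms(1,2) by (simp add: borel_measurable_integrable)
  ultimately show ?thesis
    using Bochner_Integration.integrable_bound integrable_mult_right[OF assms(1)] by blast
qed

text \<open>A weak form of \<open>E[d | F] = 0\<close>: \<open>d\<close> is orthogonal to every bounded \<open>F\<close>-measurable function.\<close>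
definition cond_mean_zero :: "'w measure \<Rightarrow> 'w measure \<Rightarrow> ('w \<Rightarrow> real) \<Rightarrow> bool" where
  "cond_mean_zero M F d \<longleftrightarrow> integrable M d \<and>
     (\<forall>g B. g \<in> borel_measurable F \<longrightarrow> (\<forall>\<omega>\<in>space M. \<bar>g \<omega>\<bar> \<le> B) \<longrightarrow> (\<integral>\<omega>. g \<omega> * d \<omega> \<partial>M) = 0)"

lemma cond_mean_zeroD:
  assumes "cond_mean_zero M F d" and "g \<in> borel_measurable F" and "\<And>\<omega>. \<omega> \<in> space M \<Longrightarrow> \<bar>g \<omega>\<bar> \<le> B"
  shows "(\<integral>\<omega>. g \<omega> * d \<omega> \<partial>M) = 0"
  using assms unfolding cond_mean_zero_def by blast

lemma cond_mean_zero_integrable: "cond_mean_zero M F d \<Longrightarrow> integrable M d"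
  unfolding cond_mean_zero_def by blast

lemma cond_mean_zero_uminus:
  assumes "cond_mean_zero M F d"
  shows "cond_mean_zero M F (\<lambda>\<omega>. - d \<omega>)"
  using assms unfolding cond_mean_zero_def by simp

lemma cond_mean_zero_cmult:
  assumes "cond_mean_zero M F d"
  shows "cond_mean_zero M F (\<lambda>\<omega>. c * d \<omega>)"
  unfolding cond_mean_zero_def
proof (intro conjI allI impI)
  show "integrable M (\<lambda>\<omega>. c * d \<omega>)"
    using cond_mean_zero_integrable[OF assms] by simp
  fix g :: "_ \<Rightarrow> real" and B :: real assume "g \<in> borel_measurable F" and g: "\<forall>\<omega>\<in>space M. \<bar>g \<omega>\<bar> \<le> B"
  then have "(\<integral>\<omega>. (c * g \<omega>) * d \<omega> \<partial>M) = 0"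
    by (intro cond_mean_zeroD[OF assms, where B = "\<bar>c\<bar> * B"]) (auto simp: abs_mult mult_left_mono)
  then show "(\<integral>\<omega>. g \<omega> * (c * d \<omega>) \<partial>M) = 0"
    by (simp add: ac_simps)
qed

lemma cond_mean_zero_sum:
  assumes "subalgebra M F" and "finite A" and "\<And>i. i \<in> A \<Longrightarrow> cond_mean_zero M F (d i)"
  shows "cond_mean_zero M F (\<lambda>\<omega>. \<Sum>i\<in>A. d i \<omega>)"
  unfolding cond_mean_zero_def
proof (intro conjI allI impI)
  show "integrable M (\<lambda>\<omega>. \<Sum>i\<in>A. d i \<omega>)"
    using assms(3) by (auto intro: cond_mean_zero_integrable)
  fix g :: "_ \<Rightarrow> real" and B :: real assume g: "g \<in> borel_measurable F" "\<forall>\<omega>\<in>space M. \<bar>g \<omega>\<bar> \<le> B"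
  have "integrable M (\<lambda>\<omega>. g \<omega> * d i \<omega>)" if "i \<in> A" for i
    using g measurable_from_subalg[OF assms(1) g(1)] assms(3)[OF that]
    by (intro integrable_bounded_mult[where B = B]) (auto intro: cond_mean_zero_integrable)
  then have "(\<integral>\<omega>. g \<omega> * (\<Sum>i\<in>A. d i \<omega>) \<partial>M) = (\<Sum>i\<in>A. \<integral>\<omega>. g \<omega> * d i \<omega> \<partial>M)"
    by (simp add: sum_distrib_left)
  also have "\<dots> = 0"
    using g assms(3) by (intro sum.neutral ballI cond_mean_zeroD[where B = B]) auto
  finally show "(\<integral>\<omega>. g \<omega> * (\<Sum>i\<in>A. d i \<omega>) \<partial>M) = 0" .
qed

text \<open>This is how the hypotheses on rewards and transitions, stated as integrals over the events
  of the history, yield orthogonality: by uniqueness, \<open>h\<close> is the conditional expectation of \<open>f\<close>.\<close>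
lemma cond_mean_zero_diff:
  fixes f h :: "'w \<Rightarrow> real"
  assumes "finite_measure M" and sub: "subalgebra M F"
    and f: "f \<in> borel_measurable M" "\<And>\<omega>. \<omega> \<in> space M \<Longrightarrow> \<bar>f \<omega>\<bar> \<le> Bf"
    and h: "h \<in> borel_measurable F" "\<And>\<omega>. \<omega> \<in> space M \<Longrightarrow> \<bar>h \<omega>\<bar> \<le> Bh"
    and eq: "\<And>E. E \<in> sets F \<Longrightarrow> (\<integral>\<omega>. indicator E \<omega> * f \<omega> \<partial>M) = (\<integral>\<omega>. indicator E \<omega> * h \<omega> \<partial>M)"
  shows "cond_mean_zero M F (\<lambda>\<omega>. f \<omega> - h \<omega>)"
  unfolding cond_mean_zero_def
proof (intro conjI allI impI)
  interpret finite_measure M by fact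
  interpret finite_measure_subalgebra M F
    by unfold_locales (fact sub)
  have hM: "h \<in> borel_measurable M"
    using measurable_from_subalg[OF sub h(1)] .
  have fi: "integrable M f"
    using f by (intro integrable_const_bound[where B = Bf]) auto
  have hi: "integrable M h"
    using h hM by (intro integrable_const_bound[where B = Bh]) auto
  show "integrable M (\<lambda>\<omega>. f \<omega> - h \<omega>)"
    using fi hi by simp
  fix g :: "_ \<Rightarrow> real" and B :: real assume g: "g \<in> borel_measurable F" "\<forall>\<omega>\<in>space M. \<bar>g \<omega>\<bar> \<le> B"
  have gM: "g \<in> borel_measurable M"
    using measurable_from_subalg[OF sub g(1)] .
  have gfi: "integrable M (\<lambda>\<omega>. g \<omega> * f \<omega>)" and ghi: "integrable M (\<lambda>\<omega>. g \<omega> * h \<omega>)"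
    using g gM fi hi by (auto intro: integrable_bounded_mult)
  have "AE \<omega> in M. real_cond_exp M F f \<omega> = h \<omega>"
    using eq fi hi h(1) by (intro real_cond_exp_charact) (simp_all add: set_lebesgue_integral_def)
  then have "(\<integral>\<omega>. g \<omega> * real_cond_exp M F f \<omega> \<partial>M) = (\<integral>\<omega>. g \<omega> * h \<omega> \<partial>M)"
    by (intro integral_cong_AE) (use gM hM in auto)
  then have "(\<integral>\<omega>. g \<omega> * f \<omega> \<partial>M) = (\<integral>\<omega>. g \<omega> * h \<omega> \<partial>M)"
    using real_cond_exp_intg(2)[OF gfi g(1) f(1)] by simp
  then show "(\<integral>\<omega>. g \<omega> * (f \<omega> - h \<omega>) \<partial>M) = 0"
    using gfi ghi by (simp add: right_diff_distrib)
qed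

section \<open>Azuma's inequality for sampled martingale differences\<close>

definition sample_count :: "(nat \<Rightarrow> 'w \<Rightarrow> real) \<Rightarrow> nat \<Rightarrow> 'w \<Rightarrow> real" where
  "sample_count I t \<omega> = (\<Sum>k\<in>{1..<t}. I k \<omega>)"

definition sampled_sum :: "(nat \<Rightarrow> 'w \<Rightarrow> real) \<Rightarrow> (nat \<Rightarrow> 'w \<Rightarrow> real) \<Rightarrow> nat \<Rightarrow> 'w \<Rightarrow> real" where
  "sampled_sum I d t \<omega> = (\<Sum>k\<in>{1..<t}. I k \<omega> * d k \<omega>)"

text \<open>Bounded martingale differences \<open>d k\<close>, observed only at the steps selected by a predictable
  \<open>{0, 1}\<close>-valued sequence \<open>I\<close>.\<close>
locale sampled_increments = prob_space M for M :: "'w measure" +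
  fixes F :: "nat \<Rightarrow> 'w measure" and I d :: "nat \<Rightarrow> 'w \<Rightarrow> real" and c :: real
  assumes subalgebra_F: "\<And>k. subalgebra M (F k)"
    and sets_F_mono: "\<And>k k'. k \<le> k' \<Longrightarrow> sets (F k) \<subseteq> sets (F k')"
    and measurable_I: "\<And>k. 1 \<le> k \<Longrightarrow> I k \<in> borel_measurable (F k)"
    and I_01: "\<And>k \<omega>. I k \<omega> = 0 \<or> I k \<omega> = 1"
    and measurable_d: "\<And>k. 1 \<le> k \<Longrightarrow> d k \<in> borel_measurable (F (Suc k))"
    and bounded_d: "\<And>k \<omega>. 1 \<le> k \<Longrightarrow> \<omega> \<in> space M \<Longrightarrow> \<bar>d k \<omega>\<bar> \<le> c"
    and cond_mean_zero_d: "\<And>k. 1 \<le> k \<Longrightarrow> cond_mean_zero M (F k) (d k)"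
    and c_pos: "0 < c"
begin

lemma measurable_F_mono:
  assumes "k \<le> t" and "f \<in> borel_measurable (F k)"
  shows "f \<in> borel_measurable (F t)"
proof (rule measurable_from_subalg[OF _ assms(2)])
  show "subalgebra (F t) (F k)"
    using subalgebra_F[of k] subalgebra_F[of t] sets_F_mono[OF assms(1)]
    by (simp add: subalgebra_def)
qed

lemma measurable_from_F: "f \<in> borel_measurable (F k) \<Longrightarrow> f \<in> borel_measurable M"
  using measurable_from_subalg[OF subalgebra_F] .

lemma measurable_sample_count: "sample_count I t \<in> borel_measurable (F t)"
  unfolding sample_count_def
  by (intro borel_measurable_sum measurable_F_mono[OF _ measurable_I]) auto

lemma measurable_sampled_sum: "sampled_sum I d t \<in> borel_measurable (F t)"
  unfolding sampled_sum_def
  by (intro borel_measurable_sum borel_measurable_times measurable_F_mono[OF _ measurable_I]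
      measurable_F_mono[OF _ measurable_d]) auto

lemma measurable_sampled_M [measurable]:
  "sample_count I t \<in> borel_measurable M" "sampled_sum I d t \<in> borel_measurable M"
  using measurable_from_F[OF measurable_sample_count] measurable_from_F[OF measurable_sampled_sum] .

lemma sample_count_nonneg: "0 \<le> sample_count I t \<omega>"
  unfolding sample_count_def using I_01 by (intro sum_nonneg) (metis order_refl zero_le_one)

lemma abs_sampled_sum_le:
  assumes "\<omega> \<in> space M"
  shows "\<bar>sampled_sum I d t \<omega>\<bar> \<le> c * t"
proof -
  have "\<bar>sampled_sum I d t \<omega>\<bar> \<le> (\<Sum>k\<in>{1..<t}. \<bar>I k \<omega> * d k \<omega>\<bar>)"
    unfolding sampled_sum_def by (rule sum_abs)
  also have "\<dots> \<le> (\<Sum>k\<in>{1..<t}. c)"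
  proof (rule sum_mono)
    fix k assume "k \<in> {1..<t}"
    then show "\<bar>I k \<omega> * d k \<omega>\<bar> \<le> c"
      using I_01[of k \<omega>] bounded_d[of k \<omega>] assms c_pos by auto
  qed
  also have "\<dots> \<le> c * t"
    using c_pos by simp
  finally show ?thesis .
qed

definition exp_supermartingale :: "real \<Rightarrow> nat \<Rightarrow> 'w \<Rightarrow> real" where
  "exp_supermartingale l t \<omega> = exp (l * sampled_sum I d t \<omega> - l\<^sup>2 * c\<^sup>2 / 2 * sample_count I t \<omega>)"

lemma measurable_exp_supermartingale: "exp_supermartingale l t \<in> borel_measurable (F t)"
  unfolding exp_supermartingale_def
  using measurable_sample_count measurable_sampled_sum by measurable

lemma exp_supermartingale_pos: "0 < exp_supermartingale l t \<omega>"
  unfolding exp_supermartingale_def by simp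

lemma exp_supermartingale_le:
  assumes "\<omega> \<in> space M"
  shows "exp_supermartingale l t \<omega> \<le> exp (\<bar>l\<bar> * (c * t))"
proof -
  have "l * sampled_sum I d t \<omega> \<le> \<bar>l\<bar> * \<bar>sampled_sum I d t \<omega>\<bar>"
    by (metis abs_ge_self abs_mult)
  also have "\<dots> \<le> \<bar>l\<bar> * (c * t)"
    using abs_sampled_sum_le[OF assms] by (rule mult_left_mono) simp
  moreover have "0 \<le> l\<^sup>2 * c\<^sup>2 / 2 * sample_count I t \<omega>"
    using sample_count_nonneg[of t \<omega>] by simp
  ultimately show ?thesis
    unfolding exp_supermartingale_def by simp
qed

lemma integrable_exp_supermartingale: "integrable M (exp_supermartingale l t)"
  using exp_supermartingale_pos exp_supermartingale_le measurable_from_F[OF measurable_exp_supermartingale]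
  by (intro integrable_const_bound[where B = "exp (\<bar>l\<bar> * (c * t))"]) (auto simp: less_imp_le)

lemma exp_supermartingale_Suc:
  assumes "1 \<le> t"
  shows "exp_supermartingale l (Suc t) \<omega>
           = exp_supermartingale l t \<omega> * exp (I t \<omega> * (l * d t \<omega> - l\<^sup>2 * c\<^sup>2 / 2))"
proof -
  have "sampled_sum I d (Suc t) \<omega> = sampled_sum I d t \<omega> + I t \<omega> * d t \<omega>"
    and "sample_count I (Suc t) \<omega> = sample_count I t \<omega> + I t \<omega>"
    using assms by (simp_all add: sampled_sum_def sample_count_def)
  then show ?thesis
    unfolding exp_supermartingale_def exp_add[symmetric] by (simp add: algebra_simps)
qed

lemma integral_exp_supermartingale_Suc_le:
  assumes t: "1 \<le> t"
  shows "(\<integral>\<omega>. exp_supermartingale l (Suc t) \<omega> \<partial>M) \<le> (\<integral>\<omega>. exp_supermartingale l t \<omega> \<partial>M)"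
proof -
  let ?Z = "exp_supermartingale l t"
  define \<kappa> where "\<kappa> = exp (- (l\<^sup>2 * c\<^sup>2 / 2)) * sinh (l * c) / c"
  define G where "G \<omega> = ?Z \<omega> * I t \<omega> * \<kappa>" for \<omega>
  have G_F: "G \<in> borel_measurable (F t)"
    unfolding G_def using measurable_exp_supermartingale measurable_I[OF t] by measurable
  have G_bound: "\<bar>G \<omega>\<bar> \<le> exp (\<bar>l\<bar> * (c * t)) * \<bar>\<kappa>\<bar>" if "\<omega> \<in> space M" for \<omega>
  proof -
    have "\<bar>?Z \<omega> * I t \<omega>\<bar> \<le> exp (\<bar>l\<bar> * (c * t))"
      using I_01[of t \<omega>] exp_supermartingale_pos[of l t \<omega>] exp_supermartingale_le[OF that, of l]
      by auto
    then show ?thesis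
      unfolding G_def abs_mult[of _ \<kappa>] by (rule mult_right_mono) simp
  qed
  have Gd: "integrable M (\<lambda>\<omega>. G \<omega> * d t \<omega>)"
    using G_bound measurable_from_F[OF G_F] cond_mean_zero_integrable[OF cond_mean_zero_d[OF t]]
    by (intro integrable_bounded_mult) auto
  have "exp_supermartingale l (Suc t) \<omega> \<le> ?Z \<omega> + G \<omega> * d t \<omega>" if "\<omega> \<in> space M" for \<omega>
  proof (cases "I t \<omega> = 0")
    case False
    then have "I t \<omega> = 1" using I_01 by blast
    then have "exp_supermartingale l (Suc t) \<omega> = ?Z \<omega> * exp (l * d t \<omega> - l\<^sup>2 * c\<^sup>2 / 2)"
      by (simp add: exp_supermartingale_Suc[OF t])
    also have "\<dots> \<le> ?Z \<omega> * (1 + \<kappa> * d t \<omega>)"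
      unfolding \<kappa>_def using exp_increment_le[OF c_pos bounded_d[OF t that]] exp_supermartingale_pos
      by (intro mult_left_mono) (auto simp: less_imp_le)
    also have "\<dots> = ?Z \<omega> + G \<omega> * d t \<omega>"
      using \<open>I t \<omega> = 1\<close> by (simp add: G_def algebra_simps)
    finally show ?thesis .
  qed (simp add: exp_supermartingale_Suc[OF t] G_def)
  then have "(\<integral>\<omega>. exp_supermartingale l (Suc t) \<omega> \<partial>M) \<le> (\<integral>\<omega>. ?Z \<omega> + G \<omega> * d t \<omega> \<partial>M)"
    using Gd integrable_exp_supermartingale by (intro integral_mono) auto
  also have "\<dots> = (\<integral>\<omega>. ?Z \<omega> \<partial>M) + (\<integral>\<omega>. G \<omega> * d t \<omega> \<partial>M)"
    using Gd integrable_exp_supermartingale by simp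
  also have "(\<integral>\<omega>. G \<omega> * d t \<omega> \<partial>M) = 0"
    using G_F G_bound by (intro cond_mean_zeroD[OF cond_mean_zero_d[OF t]])
  finally show ?thesis by simp
qed

lemma integral_exp_supermartingale_le_1:
  assumes "1 \<le> t"
  shows "(\<integral>\<omega>. exp_supermartingale l t \<omega> \<partial>M) \<le> 1"
  using assms
proof (induction t rule: dec_induct)
  case base
  show ?case
    by (simp add: exp_supermartingale_def sample_count_def sampled_sum_def prob_space)
next
  case (step t)
  then show ?case
    using integral_exp_supermartingale_Suc_le[OF step(1), of l] by simp
qed

theorem prob_sampled_sum_ge:
  assumes "1 \<le> t" and "0 < n" and "0 < u"
  shows "prob {\<omega>\<in>space M. sample_count I t \<omega> = n \<and> u \<le> sampled_sum I d t \<omega>}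
           \<le> exp (- (u\<^sup>2 / (2 * c\<^sup>2 * n)))"
proof -
  define l where "l = u / (c\<^sup>2 * n)"
    \<comment> \<open>the minimiser of \<open>l\<^sup>2 * c\<^sup>2 / 2 * n - l * u\<close>\<close>
  define C where "C = exp (u\<^sup>2 / (2 * c\<^sup>2 * n))"
  have "l * u - l\<^sup>2 * c\<^sup>2 / 2 * n = u\<^sup>2 / (2 * c\<^sup>2 * n)"
    unfolding l_def using c_pos assms by (simp add: field_simps power2_eq_square)
  moreover have "0 \<le> l"
    unfolding l_def using assms by simp
  ultimately have "u\<^sup>2 / (2 * c\<^sup>2 * n) \<le> l * v - l\<^sup>2 * c\<^sup>2 / 2 * n" if "u \<le> v" for v
    using mult_left_mono[OF that, of l] by linarith
  then have "{\<omega>\<in>space M. sample_count I t \<omega> = n \<and> u \<le> sampled_sum I d t \<omega>}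
      \<subseteq> {\<omega>\<in>space M. C \<le> exp_supermartingale l t \<omega>}"
    unfolding C_def exp_supermartingale_def by auto
  then have "prob {\<omega>\<in>space M. sample_count I t \<omega> = n \<and> u \<le> sampled_sum I d t \<omega>}
      \<le> prob {\<omega>\<in>space M. C \<le> exp_supermartingale l t \<omega>}"
    using measurable_from_F[OF measurable_exp_supermartingale] by (intro finite_measure_mono) measurable
  also have "\<dots> \<le> (\<integral>\<omega>. exp_supermartingale l t \<omega> \<partial>M) / C"
    using integrable_exp_supermartingale exp_supermartingale_pos
    by (intro integral_Markov_inequality_measure[where A = "space M"]) (auto simp: C_def less_imp_le)
  also have "\<dots> \<le> 1 / C"
    using integral_exp_supermartingale_le_1[OF assms(1)] by (simp add: C_def divide_right_mono)
  finally show ?thesis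
    by (simp add: C_def exp_minus inverse_eq_divide)
qed

corollary prob_abs_sampled_sum_ge:
  assumes "1 \<le> t" and "0 < n" and "0 < u"
  shows "prob {\<omega>\<in>space M. sample_count I t \<omega> = n \<and> u \<le> \<bar>sampled_sum I d t \<omega>\<bar>}
           \<le> 2 * exp (- (u\<^sup>2 / (2 * c\<^sup>2 * n)))"
proof -
  interpret neg: sampled_increments M F I "\<lambda>k \<omega>. - d k \<omega>" c
    using subalgebra_F sets_F_mono measurable_I I_01 measurable_d bounded_d c_pos
    by unfold_locales (simp_all add: cond_mean_zero_uminus cond_mean_zero_d)
  have neg_sum: "sampled_sum I (\<lambda>k \<omega>. - d k \<omega>) t \<omega> = - sampled_sum I d t \<omega>" for \<omega>
    by (simp add: sampled_sum_def sum_negf)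
  have "prob {\<omega>\<in>space M. sample_count I t \<omega> = n \<and> u \<le> \<bar>sampled_sum I d t \<omega>\<bar>}
      \<le> prob ({\<omega>\<in>space M. sample_count I t \<omega> = n \<and> u \<le> sampled_sum I d t \<omega>}
             \<union> {\<omega>\<in>space M. sample_count I t \<omega> = n \<and> u \<le> sampled_sum I (\<lambda>k \<omega>. - d k \<omega>) t \<omega>})"
    unfolding neg_sum by (intro finite_measure_mono) (auto simp: abs_le_iff)
  also have "\<dots> \<le> prob {\<omega>\<in>space M. sample_count I t \<omega> = n \<and> u \<le> sampled_sum I d t \<omega>}
             + prob {\<omega>\<in>space M. sample_count I t \<omega> = n \<and> u \<le> sampled_sum I (\<lambda>k \<omega>. - d k \<omega>) t \<omega>}"
    unfolding neg_sum by (intro measure_Un_le) measurable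
  also have "\<dots> \<le> 2 * exp (- (u\<^sup>2 / (2 * c\<^sup>2 * n)))"
    using prob_sampled_sum_ge[OF assms] neg.prob_sampled_sum_ge[OF assms] by simp
  finally show ?thesis .
qed

end

section \<open>The history filtration\<close>

lemma space_hist_alg [simp]: "space (hist_alg M s a r t) = space M"
  unfolding hist_alg_def by (rule space_measure_of) auto

lemma sets_hist_alg: "sets (hist_alg M s a r t) = sigma_sets (space M)
     ({{\<omega> \<in> space M. s \<tau> \<omega> = x} | \<tau> x. 1 \<le> \<tau> \<and> \<tau> \<le> t}
      \<union> {{\<omega> \<in> space M. a \<tau> \<omega> = y} | \<tau> y. 1 \<le> \<tau> \<and> \<tau> < t}
      \<union> {{\<omega> \<in> space M. r \<tau> \<omega> \<in> B} | \<tau> B. 1 \<le> \<tau> \<and> \<tau> < t \<and> B \<in> sets borel})"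
  unfolding hist_alg_def by (rule sets_measure_of) auto

lemma sets_hist_alg_mono:
  assumes "t \<le> t'"
  shows "sets (hist_alg M s a r t) \<subseteq> sets (hist_alg M s a r t')"
  unfolding sets_hist_alg
proof (intro sigma_sets_mono' Un_mono)
  show "{{\<omega> \<in> space M. s \<tau> \<omega> = x} | \<tau> x. 1 \<le> \<tau> \<and> \<tau> \<le> t}
      \<subseteq> {{\<omega> \<in> space M. s \<tau> \<omega> = x} | \<tau> x. 1 \<le> \<tau> \<and> \<tau> \<le> t'}"
    using assms by auto
  show "{{\<omega> \<in> space M. a \<tau> \<omega> = y} | \<tau> y. 1 \<le> \<tau> \<and> \<tau> < t}
      \<subseteq> {{\<omega> \<in> space M. a \<tau> \<omega> = y} | \<tau> y. 1 \<le> \<tau> \<and> \<tau> < t'}"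
    using assms by auto
  show "{{\<omega> \<in> space M. r \<tau> \<omega> \<in> B} | \<tau> B. 1 \<le> \<tau> \<and> \<tau> < t \<and> B \<in> sets borel}
      \<subseteq> {{\<omega> \<in> space M. r \<tau> \<omega> \<in> B} | \<tau> B. 1 \<le> \<tau> \<and> \<tau> < t' \<and> B \<in> sets borel}"
    using assms by auto (metis order_less_le_trans)
qed

lemma measurable_state_hist_alg:
  fixes s :: "nat \<Rightarrow> 'w \<Rightarrow> 's::countable"
  assumes "1 \<le> \<tau>" and "\<tau> \<le> t"
  shows "s \<tau> \<in> measurable (hist_alg M s a r t) (count_space UNIV)"
proof (subst measurable_count_space_eq2_countable, intro conjI ballI)
  fix x
  have "{\<omega> \<in> space M. s \<tau> \<omega> = x} \<in> sets (hist_alg M s a r t)"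
    unfolding sets_hist_alg using assms by (intro sigma_sets.Basic) auto
  then show "s \<tau> -` {x} \<inter> space (hist_alg M s a r t) \<in> sets (hist_alg M s a r t)"
    by (simp add: vimage_def Int_def conj_commute)
qed auto

lemma measurable_reward_hist_alg:
  assumes "1 \<le> \<tau>" and "\<tau> < t"
  shows "r \<tau> \<in> borel_measurable (hist_alg M s a r t)"
proof (rule measurableI)
  fix B :: "real set" assume "B \<in> sets borel"
  then have "{\<omega> \<in> space M. r \<tau> \<omega> \<in> B} \<in> sets (hist_alg M s a r t)"
    unfolding sets_hist_alg using assms by (intro sigma_sets.Basic) auto
  then show "r \<tau> -` B \<inter> space (hist_alg M s a r t) \<in> sets (hist_alg M s a r t)"
    by (simp add: vimage_def Int_def conj_commute)
qed auto

section \<open>Drift and averaging estimates\<close>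

lemma abs_diff_le_sum_abs_increments:
  fixes f :: "nat \<Rightarrow> real"
  assumes "i \<in> {1..T}" and "j \<in> {1..T}"
  shows "\<bar>f j - f i\<bar> \<le> (\<Sum>k\<in>{1..<T}. \<bar>f (Suc k) - f k\<bar>)"
proof -
  have ordered: "\<bar>f j - f i\<bar> \<le> (\<Sum>k\<in>{1..<T}. \<bar>f (Suc k) - f k\<bar>)"
    if "i \<in> {1..T}" "j \<in> {1..T}" "i \<le> j" for i j
  proof -
    have "\<bar>f j - f i\<bar> = \<bar>\<Sum>k\<in>{i..<j}. f (Suc k) - f k\<bar>"
      by (simp add: sum_Suc_diff' \<open>i \<le> j\<close>)
    also have "\<dots> \<le> (\<Sum>k\<in>{i..<j}. \<bar>f (Suc k) - f k\<bar>)"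
      by (rule sum_abs)
    also have "\<dots> \<le> (\<Sum>k\<in>{1..<T}. \<bar>f (Suc k) - f k\<bar>)"
      using that by (intro sum_mono2) auto
    finally show ?thesis .
  qed
  show ?thesis
    using ordered[OF assms] ordered[OF assms(2,1)] by (cases "i \<le> j") (auto simp: abs_minus_commute)
qed

lemma reward_variation_bound:
  fixes rbar :: "nat \<Rightarrow> 's::finite \<Rightarrow> 'a::finite \<Rightarrow> real"
  assumes "\<tau> \<in> {1..T}" and "k \<in> {1..T}"
  shows "\<bar>rbar \<tau> x y - rbar k x y\<bar> \<le> reward_variation rbar T"
proof -
  have "\<bar>rbar \<tau> x y - rbar k x y\<bar> \<le> (\<Sum>i\<in>{1..<T}. \<bar>rbar (Suc i) x y - rbar i x y\<bar>)"
    using abs_diff_le_sum_abs_increments[OF assms(2,1), of "\<lambda>i. rbar i x y"] .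
  also have "\<dots> \<le> reward_variation rbar T"
    unfolding reward_variation_def
    by (intro sum_mono Max_ge) (auto intro: image_eqI[where x = "(x, y)"])
  finally show ?thesis .
qed

lemma trans_variation_bound:
  fixes p :: "nat \<Rightarrow> 's::finite \<Rightarrow> 'a::finite \<Rightarrow> 's pmf"
  assumes "\<tau> \<in> {1..T}" and "k \<in> {1..T}"
  shows "(\<Sum>x'\<in>UNIV. \<bar>pmf (p \<tau> x y) x' - pmf (p k x y) x'\<bar>) \<le> trans_variation p T"
proof -
  have "(\<Sum>x'\<in>UNIV. \<bar>pmf (p \<tau> x y) x' - pmf (p k x y) x'\<bar>)
      \<le> (\<Sum>x'\<in>UNIV. \<Sum>i\<in>{1..<T}. \<bar>pmf (p (Suc i) x y) x' - pmf (p i x y) x'\<bar>)"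
    using assms by (intro sum_mono abs_diff_le_sum_abs_increments)
  also have "\<dots> = (\<Sum>i\<in>{1..<T}. \<Sum>x'\<in>UNIV. \<bar>pmf (p (Suc i) x y) x' - pmf (p i x y) x'\<bar>)"
    by (rule sum.swap)
  also have "\<dots> \<le> trans_variation p T"
    unfolding trans_variation_def
    by (intro sum_mono Max_ge) (auto intro: image_eqI[where x = "(x, y)"])
  finally show ?thesis .
qed

lemma abs_diff_average_le:
  fixes rr rb :: "nat \<Rightarrow> real" and R Vr Q :: real
  assumes "finite V" and "V \<noteq> {}"
    and drift: "\<And>k. k \<in> V \<Longrightarrow> \<bar>R - rb k\<bar> \<le> Vr"
    and noise: "\<bar>\<Sum>k\<in>V. rr k - rb k\<bar> \<le> card V * Q"
  shows "\<bar>R - (\<Sum>k\<in>V. rr k) / card V\<bar> \<le> Vr + Q"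
proof -
  have N: "0 < real (card V)"
    using assms by (simp add: card_gt_0_iff)
  have "R - (\<Sum>k\<in>V. rr k) / card V = ((\<Sum>k\<in>V. R - rb k) - (\<Sum>k\<in>V. rr k - rb k)) / card V"
    using N by (simp add: sum_subtractf field_simps)
  moreover have "\<bar>(\<Sum>k\<in>V. R - rb k) - (\<Sum>k\<in>V. rr k - rb k)\<bar> \<le> card V * Vr + card V * Q"
  proof -
    have "\<bar>\<Sum>k\<in>V. R - rb k\<bar> \<le> (\<Sum>k\<in>V. Vr)"
      using drift by (intro order_trans[OF sum_abs] sum_mono) auto
    then show ?thesis
      using noise by simp
  qed
  ultimately show ?thesis
    using N by (simp add: field_simps)
qed

lemma l1_dist_average_le:
  fixes P0 :: "'s::finite \<Rightarrow> real" and P X :: "nat \<Rightarrow> 's \<Rightarrow> real" and Vp Q :: real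
  assumes "finite V" and "V \<noteq> {}"
    and drift: "\<And>k. k \<in> V \<Longrightarrow> (\<Sum>x\<in>UNIV. \<bar>P0 x - P k x\<bar>) \<le> Vp"
    and noise: "\<And>B. (\<Sum>k\<in>V. \<Sum>x\<in>UNIV. (if x \<in> B then 1 else -1) * (X k x - P k x)) \<le> card V * Q"
  shows "(\<Sum>x\<in>UNIV. \<bar>P0 x - (\<Sum>k\<in>V. X k x) / card V\<bar>) \<le> Vp + Q"
proof -
  have N: "0 < real (card V)"
    using assms by (simp add: card_gt_0_iff)
  define q where "q x = (\<Sum>k\<in>V. X k x - P k x)" for x
  define B where "B = {x. 0 \<le> q x}"
  have "(\<Sum>x\<in>UNIV. \<bar>q x\<bar>) = (\<Sum>x\<in>UNIV. (if x \<in> B then 1 else -1) * q x)"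
    by (intro sum.cong) (auto simp: B_def)
  also have "\<dots> = (\<Sum>k\<in>V. \<Sum>x\<in>UNIV. (if x \<in> B then 1 else -1) * (X k x - P k x))"
    unfolding q_def sum_distrib_left by (rule sum.swap)
  also have "\<dots> \<le> card V * Q"
    by (rule noise)
  finally have q: "(\<Sum>x\<in>UNIV. \<bar>q x\<bar>) \<le> card V * Q" .
  have "\<bar>P0 x - (\<Sum>k\<in>V. X k x) / card V\<bar> = \<bar>(\<Sum>k\<in>V. P0 x - P k x) - q x\<bar> / card V" for x
    using N by (simp add: q_def sum_subtractf field_simps)
  also have "\<dots> x \<le> ((\<Sum>k\<in>V. \<bar>P0 x - P k x\<bar>) + \<bar>q x\<bar>) / card V" for x
    using N by (intro divide_right_mono order_trans[OF abs_triangle_ineq4] add_right_mono sum_abs) auto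
  finally have "(\<Sum>x\<in>UNIV. \<bar>P0 x - (\<Sum>k\<in>V. X k x) / card V\<bar>)
      \<le> (\<Sum>x\<in>UNIV. ((\<Sum>k\<in>V. \<bar>P0 x - P k x\<bar>) + \<bar>q x\<bar>) / card V)"
    by (intro sum_mono)
  also have "\<dots> = ((\<Sum>x\<in>UNIV. \<Sum>k\<in>V. \<bar>P0 x - P k x\<bar>) + (\<Sum>x\<in>UNIV. \<bar>q x\<bar>)) / card V"
    by (simp add: sum_divide_distrib[symmetric] sum.distrib)
  also have "\<dots> \<le> (card V * Vp + card V * Q) / card V"
  proof (rule divide_right_mono)
    have "(\<Sum>x\<in>UNIV. \<Sum>k\<in>V. \<bar>P0 x - P k x\<bar>) = (\<Sum>k\<in>V. \<Sum>x\<in>UNIV. \<bar>P0 x - P k x\<bar>)"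
      by (rule sum.swap)
    also have "\<dots> \<le> (\<Sum>k\<in>V. Vp)"
      using drift by (rule sum_mono)
    finally show "(\<Sum>x\<in>UNIV. \<Sum>k\<in>V. \<bar>P0 x - P k x\<bar>) + (\<Sum>x\<in>UNIV. \<bar>q x\<bar>) \<le> card V * Vp + card V * Q"
      using q by simp
  qed simp
  also have "\<dots> = Vp + Q"
    using N by (simp add: field_simps)
  finally show ?thesis .
qed

lemma sum_cube_ratio_le_1: "(\<Sum>t\<in>{1..T}. (real t - 1) / real t ^ 3) \<le> 1"
proof -
  have "(\<Sum>t\<in>{1..T}. (real t - 1) / real t ^ 3) \<le> 1 - 1 / (real T + 1)"
  proof (induction T)
    case (Suc T)
    have pos: "0 < real T + 1" "0 < real T + 2"
      by simp_all
    have "real T * ((real T + 1) * (real T + 2)) \<le> (real T + 1) ^ 3"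
      by (simp add: power3_eq_cube algebra_simps)
    then have "real T / (real T + 1) ^ 3 \<le> 1 / ((real T + 1) * (real T + 2))"
      using pos by (simp add: divide_simps)
    also have "\<dots> = 1 / (real T + 1) - 1 / (real T + 2)"
      using pos by (simp add: field_simps)
    finally show ?case
      using Suc by (simp add: add.commute)
  qed simp
  moreover have "0 \<le> 1 / (real T + 1)"
    by simp
  ultimately show ?thesis
    by linarith
qed

lemma measure_UNION_le_sum:
  assumes "finite I" and "\<And>i. i \<in> I \<Longrightarrow> A i \<in> sets M" and "\<And>i. i \<in> I \<Longrightarrow> measure M (A i) \<le> b i"
  shows "measure M (\<Union>i\<in>I. A i) \<le> (\<Sum>i\<in>I. b i)"
  using order_trans[OF measure_UNION_le[OF assms(1,2)] sum_mono[OF assms(3)]] .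

lemma max_1_card: "finite A \<Longrightarrow> A \<noteq> {} \<Longrightarrow> max 1 (real (card A)) = card A"
  by (simp add: Suc_le_eq card_gt_0_iff)

section \<open>Concentration along a trajectory\<close>

locale mdp_trajectory = prob_space M for M :: "'w measure" +
  fixes s :: "nat \<Rightarrow> 'w \<Rightarrow> 's::finite" and a :: "nat \<Rightarrow> 'w \<Rightarrow> 'a::finite" and r :: "nat \<Rightarrow> 'w \<Rightarrow> real"
    and rbar :: "nat \<Rightarrow> 's \<Rightarrow> 'a \<Rightarrow> real" and p :: "nat \<Rightarrow> 's \<Rightarrow> 'a \<Rightarrow> 's pmf"
  assumes rbar_range: "\<And>t x y. rbar t x y \<in> {0..1}"
    and measurable_s [measurable]: "\<And>t. s t \<in> measurable M (count_space UNIV)"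
    and measurable_r [measurable]: "\<And>t. r t \<in> borel_measurable M"
    and r_range: "\<And>t \<omega>. \<omega> \<in> space M \<Longrightarrow> r t \<omega> \<in> {0..1}"
    and adapted_a: "\<And>t. 1 \<le> t \<Longrightarrow> a t \<in> measurable (hist_alg M s a r t) (count_space UNIV)"
    and reward_mean: "\<And>t E. 1 \<le> t \<Longrightarrow> E \<in> sets (hist_alg M s a r t) \<Longrightarrow>
           (\<integral>\<omega>. indicator E \<omega> * r t \<omega> \<partial>M) = (\<integral>\<omega>. indicator E \<omega> * rbar t (s t \<omega>) (a t \<omega>) \<partial>M)"
    and transition_law: "\<And>t E x. 1 \<le> t \<Longrightarrow> E \<in> sets (hist_alg M s a r t) \<Longrightarrow>
           measure M (E \<inter> {\<omega> \<in> space M. s (Suc t) \<omega> = x})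
             = (\<integral>\<omega>. indicator E \<omega> * pmf (p t (s t \<omega>) (a t \<omega>)) x \<partial>M)"
begin

abbreviation hist :: "nat \<Rightarrow> 'w measure" where
  "hist \<equiv> hist_alg M s a r"

lemma sets_hist_subset: "sets (hist t) \<subseteq> sets M"
proof (induction t rule: less_induct)
  case (less t)
  have "{\<omega> \<in> space M. a \<tau> \<omega> = y} \<in> sets M" if "1 \<le> \<tau>" "\<tau> < t" for \<tau> y
  proof -
    have "subalgebra M (hist \<tau>)"
      using less[OF that(2)] by (simp add: subalgebra_def)
    then have [measurable]: "a \<tau> \<in> measurable M (count_space UNIV)"
      using adapted_a[OF that(1)] by (rule measurable_from_subalg)
    show ?thesis
      by measurable
  qed
  then show ?case
    unfolding sets_hist_alg by (intro sets.sigma_sets_subset) auto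
qed

lemma subalgebra_hist: "subalgebra M (hist t)"
  using sets_hist_subset by (simp add: subalgebra_def)

lemma measurable_a_hist:
  assumes "1 \<le> \<tau>" and "\<tau> \<le> t"
  shows "a \<tau> \<in> measurable (hist t) (count_space UNIV)"
proof (rule measurable_from_subalg[OF _ adapted_a[OF assms(1)]])
  show "subalgebra (hist t) (hist \<tau>)"
    using sets_hist_alg_mono[OF assms(2)] by (simp add: subalgebra_def)
qed

lemma measurable_a [measurable]: "1 \<le> t \<Longrightarrow> a t \<in> measurable M (count_space UNIV)"
  using measurable_from_subalg[OF subalgebra_hist adapted_a] .

definition visits :: "'s \<Rightarrow> 'a \<Rightarrow> nat \<Rightarrow> 'w \<Rightarrow> real" where
  "visits x y k \<omega> = (if s k \<omega> = x \<and> a k \<omega> = y then 1 else 0)"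

definition reward_noise :: "nat \<Rightarrow> 'w \<Rightarrow> real" where
  "reward_noise k \<omega> = r k \<omega> - rbar k (s k \<omega>) (a k \<omega>)"

definition next_state_noise :: "'s \<Rightarrow> nat \<Rightarrow> 'w \<Rightarrow> real" where
  "next_state_noise x' k \<omega> = (if s (Suc k) \<omega> = x' then 1 else 0) - pmf (p k (s k \<omega>) (a k \<omega>)) x'"

text \<open>Pairing the next-state noise with the sign pattern of a set \<open>B\<close>: the \<open>\<ell>\<^sub>1\<close> deviation of
  the empirical transition law is the maximum over \<open>B\<close> of these sums.\<close>
definition transition_noise :: "'s set \<Rightarrow> nat \<Rightarrow> 'w \<Rightarrow> real" where
  "transition_noise B k \<omega> = (\<Sum>x'\<in>UNIV. (if x' \<in> B then 1 else -1) * next_state_noise x' k \<omega>)"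

lemma measurable_visits_hist:
  assumes "1 \<le> k" and "k \<le> t"
  shows "visits x y k \<in> borel_measurable (hist t)"
proof -
  note [measurable] = measurable_state_hist_alg[OF assms] measurable_a_hist[OF assms]
  show ?thesis
    unfolding visits_def by measurable
qed

lemma measurable_visits [measurable]: "1 \<le> k \<Longrightarrow> visits x y k \<in> borel_measurable M"
  unfolding visits_def by measurable

lemma measurable_state_action_hist:
  assumes "1 \<le> k" and "k \<le> t"
  shows "(\<lambda>\<omega>. f (s k \<omega>) (a k \<omega>)) \<in> borel_measurable (hist t)"
proof -
  note [measurable] = measurable_state_hist_alg[OF assms] measurable_a_hist[OF assms]
  show ?thesis
    by measurable
qed

lemma sampled_increments_reward: "sampled_increments M hist (visits x y) reward_noise 1"
proof unfold_locales
  fix k :: nat assume k: "1 \<le> k"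
  show "reward_noise k \<in> borel_measurable (hist (Suc k))"
    unfolding reward_noise_def
    using measurable_reward_hist_alg[of k "Suc k"] measurable_state_action_hist[of k "Suc k"] k
    by (intro borel_measurable_diff) auto
  show "cond_mean_zero M (hist k) (reward_noise k)"
    unfolding reward_noise_def
    using k r_range rbar_range measurable_state_action_hist[OF k order_refl]
    by (intro cond_mean_zero_diff[where Bf = 1 and Bh = 1] finite_measure subalgebra_hist reward_mean)
      (auto simp: abs_le_iff)
  fix \<omega> assume "\<omega> \<in> space M"
  then show "\<bar>reward_noise k \<omega>\<bar> \<le> 1"
    using r_range[of \<omega> k] rbar_range[of k "s k \<omega>" "a k \<omega>"] by (auto simp: reward_noise_def abs_le_iff)
qed (auto simp: subalgebra_hist sets_hist_alg_mono measurable_visits_hist visits_def)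

lemma cond_mean_zero_next_state_noise:
  assumes k: "1 \<le> k"
  shows "cond_mean_zero M (hist k) (next_state_noise x' k)"
  unfolding next_state_noise_def
proof (rule cond_mean_zero_diff[where Bf = 1 and Bh = 1, OF finite_measure subalgebra_hist])
  fix E assume E: "E \<in> sets (hist k)"
  then have "E \<in> sets M"
    using sets_hist_subset by blast
  have "((\<integral>\<omega>. indicator E \<omega> * (if s (Suc k) \<omega> = x' then 1 else 0) \<partial>M) :: real)
      = (\<integral>\<omega>. indicator (E \<inter> {\<omega> \<in> space M. s (Suc k) \<omega> = x'}) \<omega> \<partial>M)"
    by (rule Bochner_Integration.integral_cong) (auto simp: indicator_def)
  also have "\<dots> = measure M (E \<inter> {\<omega> \<in> space M. s (Suc k) \<omega> = x'})"
    using \<open>E \<in> sets M\<close> by (simp add: Int_absorb2 Int_assoc)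
  also have "\<dots> = (\<integral>\<omega>. indicator E \<omega> * pmf (p k (s k \<omega>) (a k \<omega>)) x' \<partial>M)"
    using transition_law[OF k E] .
  finally show "(\<integral>\<omega>. indicator E \<omega> * (if s (Suc k) \<omega> = x' then 1 else 0) \<partial>M)
      = (\<integral>\<omega>. indicator E \<omega> * pmf (p k (s k \<omega>) (a k \<omega>)) x' \<partial>M)" .
qed (use measurable_state_action_hist[OF k order_refl] in \<open>auto simp: pmf_le_1\<close>)

lemma abs_transition_noise_le: "\<bar>transition_noise B k \<omega>\<bar> \<le> 2"
proof -
  have "\<bar>transition_noise B k \<omega>\<bar> \<le> (\<Sum>x'\<in>UNIV. \<bar>next_state_noise x' k \<omega>\<bar>)"
    unfolding transition_noise_def by (intro order_trans[OF sum_abs] sum_mono) (simp add: abs_mult)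
  also have "\<dots> \<le> (\<Sum>x'\<in>UNIV. (if s (Suc k) \<omega> = x' then 1 else 0) + pmf (p k (s k \<omega>) (a k \<omega>)) x')"
    unfolding next_state_noise_def by (intro sum_mono) (simp add: abs_le_iff)
  also have "\<dots> = 2"
    by (simp add: sum.distrib sum_pmf_eq_1)
  finally show ?thesis .
qed

lemma sampled_increments_transition: "sampled_increments M hist (visits x y) (transition_noise B) 2"
proof unfold_locales
  fix k :: nat assume k: "1 \<le> k"
  note [measurable] = measurable_state_hist_alg[of k "Suc k"] measurable_state_hist_alg[of "Suc k" "Suc k"]
    measurable_a_hist[of k "Suc k"]
  show "transition_noise B k \<in> borel_measurable (hist (Suc k))"
    unfolding transition_noise_def next_state_noise_def using k by measurable
  show "cond_mean_zero M (hist k) (transition_noise B k)"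
    unfolding transition_noise_def
    by (intro cond_mean_zero_sum cond_mean_zero_cmult cond_mean_zero_next_state_noise subalgebra_hist k) simp
qed (auto simp: subalgebra_hist sets_hist_alg_mono measurable_visits_hist visits_def abs_transition_noise_le)

lemma sum_visits_mult:
  "(\<Sum>k\<in>{1..<t}. visits x y k \<omega> * f k) = (\<Sum>k\<in>{k \<in> {1..<t}. s k \<omega> = x \<and> a k \<omega> = y}. f k)"
  by (subst sum.inter_filter) (auto simp: visits_def intro!: sum.cong)

lemma sample_count_visits: "sample_count (visits x y) t \<omega> = real (visit_count s a t \<omega> x y)"
  using sum_visits_mult[where f = "\<lambda>_. 1"] by (simp add: sample_count_def visit_count_def)

lemma sampled_sum_reward_noise:
  "sampled_sum (visits x y) reward_noise t \<omega>
     = (\<Sum>k\<in>{k \<in> {1..<t}. s k \<omega> = x \<and> a k \<omega> = y}. r k \<omega> - rbar k x y)"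
  unfolding sampled_sum_def sum_visits_mult by (intro sum.cong) (auto simp: reward_noise_def)

lemma sampled_sum_transition_noise:
  "sampled_sum (visits x y) (transition_noise B) t \<omega>
     = (\<Sum>k\<in>{k \<in> {1..<t}. s k \<omega> = x \<and> a k \<omega> = y}. \<Sum>x'\<in>UNIV.
          (if x' \<in> B then 1 else -1) * ((if s (Suc k) \<omega> = x' then 1 else 0) - pmf (p k x y) x'))"
  unfolding sampled_sum_def sum_visits_mult
  by (intro sum.cong) (auto simp: transition_noise_def next_state_noise_def)

lemma emp_trans_eq:
  "emp_trans s a t \<omega> x y x'
     = (\<Sum>k\<in>{k \<in> {1..<t}. s k \<omega> = x \<and> a k \<omega> = y}. if s (Suc k) \<omega> = x' then 1 else 0)
         / max 1 (real (visit_count s a t \<omega> x y))"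
proof -
  have "{k \<in> {1..<t}. s k \<omega> = x \<and> a k \<omega> = y \<and> s (Suc k) \<omega> = x'}
      = {k \<in> {k \<in> {1..<t}. s k \<omega> = x \<and> a k \<omega> = y}. s (Suc k) \<omega> = x'}"
    by auto
  then show ?thesis
    unfolding emp_trans_def by (simp add: sum.inter_filter[symmetric])
qed

definition conf_log :: "real \<Rightarrow> nat \<Rightarrow> real" where
  "conf_log \<delta> t = ln (8 * real CARD('s) * real CARD('a) * real t ^ 3 / \<delta>)"

lemma eight_le_conf_arg:
  assumes "0 < \<delta>" and "\<delta> \<le> 1" and "1 \<le> t"
  shows "8 \<le> 8 * real CARD('s) * real CARD('a) * real t ^ 3 / \<delta>"
proof -
  have "1 * 1 * 1 \<le> real CARD('s) * real CARD('a) * real t ^ 3"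
    using assms(3) by (intro mult_mono) (auto simp: Suc_le_eq one_le_power)
  also have "\<dots> \<le> real CARD('s) * real CARD('a) * real t ^ 3 / \<delta>"
    using assms by (simp add: le_divide_eq)
  finally show ?thesis
    by simp
qed

lemma conf_log_ge_1:
  assumes "0 < \<delta>" and "\<delta> \<le> 1" and "1 \<le> t"
  shows "1 \<le> conf_log \<delta> t"
proof -
  have "exp 1 \<le> 8 * real CARD('s) * real CARD('a) * real t ^ 3 / \<delta>"
    using exp_le eight_le_conf_arg[OF assms] by linarith
  then show ?thesis
    unfolding conf_log_def using eight_le_conf_arg[OF assms] by (simp add: ln_ge_iff)
qed

lemma exp_neg_conf_log:
  assumes "0 < \<delta>" and "1 \<le> t"
  shows "exp (- conf_log \<delta> t) = \<delta> / (8 * real CARD('s) * real CARD('a) * real t ^ 3)"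
  using assms by (simp add: conf_log_def exp_minus)

definition reward_deviation_event :: "real \<Rightarrow> nat \<Rightarrow> 's \<Rightarrow> 'a \<Rightarrow> nat \<Rightarrow> 'w set" where
  "reward_deviation_event \<delta> t x y n = {\<omega> \<in> space M. sample_count (visits x y) t \<omega> = n
     \<and> n * sqrt (8 * conf_log \<delta> t / n) \<le> \<bar>sampled_sum (visits x y) reward_noise t \<omega>\<bar>}"

definition transition_deviation_event :: "real \<Rightarrow> nat \<Rightarrow> 's \<Rightarrow> 'a \<Rightarrow> nat \<Rightarrow> 's set \<Rightarrow> 'w set" where
  "transition_deviation_event \<delta> t x y n B = {\<omega> \<in> space M. sample_count (visits x y) t \<omega> = n
     \<and> n * sqrt (8 * CARD('s) * conf_log \<delta> t / n) \<le> sampled_sum (visits x y) (transition_noise B) t \<omega>}"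

definition bad_event :: "real \<Rightarrow> nat \<Rightarrow> 's \<Rightarrow> 'a \<Rightarrow> nat \<Rightarrow> 'w set" where
  "bad_event \<delta> t x y n
     = reward_deviation_event \<delta> t x y n \<union> (\<Union>B. transition_deviation_event \<delta> t x y n B)"

lemma noise_outside_bad_events:
  fixes t :: nat and \<omega> :: 'w and x :: 's and y :: 'a
  defines "V \<equiv> {k \<in> {1..<t}. s k \<omega> = x \<and> a k \<omega> = y}"
  assumes "\<omega> \<in> space M" and "V \<noteq> {}" and "\<And>n. n \<in> {1..<t} \<Longrightarrow> \<omega> \<notin> bad_event \<delta> t x y n"
  shows "\<bar>\<Sum>k\<in>V. r k \<omega> - rbar k x y\<bar> \<le> card V * sqrt (8 * conf_log \<delta> t / card V)"
    and "(\<Sum>k\<in>V. \<Sum>x'\<in>UNIV. (if x' \<in> B then 1 else -1) * ((if s (Suc k) \<omega> = x' then 1 else 0) - pmf (p k x y) x'))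
           \<le> card V * sqrt (8 * CARD('s) * conf_log \<delta> t / card V)"
proof -
  have "card V \<le> card {1..<t}"
    by (intro card_mono) (auto simp: V_def)
  then have "card V \<in> {1..<t}"
    using \<open>V \<noteq> {}\<close> by (auto simp: V_def card_gt_0_iff Suc_le_eq)
  then have "\<omega> \<notin> reward_deviation_event \<delta> t x y (card V)"
    and "\<omega> \<notin> transition_deviation_event \<delta> t x y (card V) B"
    using assms(4) unfolding bad_event_def by blast+
  then show "\<bar>\<Sum>k\<in>V. r k \<omega> - rbar k x y\<bar> \<le> card V * sqrt (8 * conf_log \<delta> t / card V)"
    and "(\<Sum>k\<in>V. \<Sum>x'\<in>UNIV. (if x' \<in> B then 1 else -1) * ((if s (Suc k) \<omega> = x' then 1 else 0) - pmf (p k x y) x'))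
           \<le> card V * sqrt (8 * CARD('s) * conf_log \<delta> t / card V)"
    using assms(2) unfolding V_def
    by (auto simp: reward_deviation_event_def transition_deviation_event_def
        sample_count_visits visit_count_def sampled_sum_reward_noise sampled_sum_transition_noise not_le)
qed

lemma reward_plausible_outside_bad_events:
  assumes "0 < \<delta>" and "\<delta> \<le> 1" and t: "t \<in> {1..T}" and \<tau>: "\<tau> \<in> {1..T}" and \<omega>: "\<omega> \<in> space M"
    and good: "\<And>n. n \<in> {1..<t} \<Longrightarrow> \<omega> \<notin> bad_event \<delta> t x y n"
  shows "\<bar>rbar \<tau> x y - emp_reward s a r t \<omega> x y\<bar>
           \<le> reward_variation rbar T + sqrt (8 * conf_log \<delta> t / max 1 (real (visit_count s a t \<omega> x y)))"
proof -
  define V where "V = {k \<in> {1..<t}. s k \<omega> = x \<and> a k \<omega> = y}"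
  have emp: "emp_reward s a r t \<omega> x y = (\<Sum>k\<in>V. r k \<omega>) / max 1 (real (card V))"
    and N: "visit_count s a t \<omega> x y = card V"
    by (simp_all add: emp_reward_def visit_count_def V_def)
  show ?thesis
  proof (cases "V = {}")
    case True
    have "\<bar>rbar \<tau> x y - emp_reward s a r t \<omega> x y\<bar> \<le> 1"
      using rbar_range[of \<tau> x y] by (simp add: emp True abs_le_iff)
    also have "\<dots> \<le> sqrt (8 * conf_log \<delta> t / max 1 (real (visit_count s a t \<omega> x y)))"
      using conf_log_ge_1[of \<delta> t] assms by (simp add: N True)
    also have "\<dots> \<le> reward_variation rbar T + \<dots>"
      using reward_variation_bound[of 1 T 1 rbar x y] t by simp
    finally show ?thesis .
  next
    case False
    have "\<bar>rbar \<tau> x y - (\<Sum>k\<in>V. r k \<omega>) / card V\<bar> \<le> reward_variation rbar T + sqrt (8 * conf_log \<delta> t / card V)"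
    proof (rule abs_diff_average_le)
      show "\<bar>rbar \<tau> x y - rbar k x y\<bar> \<le> reward_variation rbar T" if "k \<in> V" for k
        using that t \<tau> by (intro reward_variation_bound) (auto simp: V_def)
      show "\<bar>\<Sum>k\<in>V. r k \<omega> - rbar k x y\<bar> \<le> card V * sqrt (8 * conf_log \<delta> t / card V)"
        using noise_outside_bad_events(1)[OF \<omega> _ good] False unfolding V_def by blast
    qed (use False in \<open>simp_all add: V_def\<close>)
    then show ?thesis
      using False by (simp add: emp N max_1_card V_def)
  qed
qed

lemma transition_plausible_outside_bad_events:
  assumes "0 < \<delta>" and "\<delta> \<le> 1" and t: "t \<in> {1..T}" and \<tau>: "\<tau> \<in> {1..T}" and \<omega>: "\<omega> \<in> space M"
    and good: "\<And>n. n \<in> {1..<t} \<Longrightarrow> \<omega> \<notin> bad_event \<delta> t x y n"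
  shows "(\<Sum>x'\<in>UNIV. \<bar>pmf (p \<tau> x y) x' - emp_trans s a t \<omega> x y x'\<bar>)
           \<le> trans_variation p T
             + sqrt (8 * CARD('s) * conf_log \<delta> t / max 1 (real (visit_count s a t \<omega> x y)))"
proof -
  define V where "V = {k \<in> {1..<t}. s k \<omega> = x \<and> a k \<omega> = y}"
  have emp: "emp_trans s a t \<omega> x y x'
      = (\<Sum>k\<in>V. if s (Suc k) \<omega> = x' then 1 else 0) / max 1 (real (card V))" for x'
    by (simp add: emp_trans_eq visit_count_def V_def)
  have N: "visit_count s a t \<omega> x y = card V"
    by (simp add: visit_count_def V_def)
  show ?thesis
  proof (cases "V = {}")
    case True
    have "1 \<le> real CARD('s)" and "1 \<le> conf_log \<delta> t"
      using conf_log_ge_1[of \<delta> t] assms by (auto simp: Suc_le_eq)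
    then have "1 * 1 \<le> (8 * real CARD('s)) * conf_log \<delta> t"
      by (intro mult_mono) linarith+
    then have "(\<Sum>x'\<in>UNIV. \<bar>pmf (p \<tau> x y) x' - emp_trans s a t \<omega> x y x'\<bar>)
        \<le> sqrt (8 * CARD('s) * conf_log \<delta> t / max 1 (real (visit_count s a t \<omega> x y)))"
      by (simp add: emp N True sum_pmf_eq_1)
    also have "\<dots> \<le> trans_variation p T + \<dots>"
      using trans_variation_bound[of 1 T 1 p x y] t by simp
    finally show ?thesis .
  next
    case False
    have "(\<Sum>x'\<in>UNIV. \<bar>pmf (p \<tau> x y) x' - (\<Sum>k\<in>V. if s (Suc k) \<omega> = x' then 1 else 0) / card V\<bar>)
        \<le> trans_variation p T + sqrt (8 * CARD('s) * conf_log \<delta> t / card V)"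
    proof (rule l1_dist_average_le)
      show "(\<Sum>x'\<in>UNIV. \<bar>pmf (p \<tau> x y) x' - pmf (p k x y) x'\<bar>) \<le> trans_variation p T" if "k \<in> V" for k
        using that t \<tau> by (intro trans_variation_bound) (auto simp: V_def)
      show "(\<Sum>k\<in>V. \<Sum>x'\<in>UNIV. (if x' \<in> B then 1 else -1)
          * ((if s (Suc k) \<omega> = x' then 1 else 0) - pmf (p k x y) x'))
        \<le> card V * sqrt (8 * CARD('s) * conf_log \<delta> t / card V)" for B
        using noise_outside_bad_events(2)[OF \<omega> _ good] False unfolding V_def by blast
    qed (use False in \<open>simp_all add: V_def\<close>)
    then show ?thesis
      using False by (simp add: emp N max_1_card V_def)
  qed
qed

lemma in_plausible_outside_bad_events:
  assumes "0 < \<delta>" and "\<delta> \<le> 1" and "t \<in> {1..T}" and "\<tau> \<in> {1..T}" and "\<omega> \<in> space M"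
    and "\<And>x y n. n \<in> {1..<t} \<Longrightarrow> \<omega> \<notin> bad_event \<delta> t x y n"
  shows "in_plausible \<delta> (reward_variation rbar T) (trans_variation p T) s a r t \<omega> (rbar \<tau>) (p \<tau>)"
  using reward_plausible_outside_bad_events[OF assms(1-5)] transition_plausible_outside_bad_events[OF assms(1-5)]
    assms(6)
  unfolding in_plausible_def conf_log_def by simp

lemma emp_reward_eq_sampled_sum:
  "emp_reward s a r t \<omega> x y = sampled_sum (visits x y) r t \<omega> / max 1 (sample_count (visits x y) t \<omega>)"
  unfolding emp_reward_def sampled_sum_def sum_visits_mult sample_count_visits by simp

lemma emp_trans_eq_sampled_sum:
  "emp_trans s a t \<omega> x y x'
     = sampled_sum (visits x y) (\<lambda>k \<omega>. if s (Suc k) \<omega> = x' then 1 else 0) t \<omega>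
         / max 1 (sample_count (visits x y) t \<omega>)"
  unfolding emp_trans_eq sampled_sum_def sum_visits_mult sample_count_visits by simp

lemma measurable_sampled_noise:
  "sample_count (visits x y) t \<in> borel_measurable M"
  "sampled_sum (visits x y) reward_noise t \<in> borel_measurable M"
  "sampled_sum (visits x y) (transition_noise B) t \<in> borel_measurable M"
  using sampled_increments.measurable_sampled_M[OF sampled_increments_reward]
    sampled_increments.measurable_sampled_M[OF sampled_increments_transition] by blast+

lemma measurable_sampled_sum_visits:
  assumes "\<And>k. 1 \<le> k \<Longrightarrow> f k \<in> borel_measurable M"
  shows "sampled_sum (visits x y) f t \<in> borel_measurable M"
  unfolding sampled_sum_def
  by (intro borel_measurable_sum borel_measurable_times measurable_visits assms) auto

lemma measurable_empirical:
  "(\<lambda>\<omega>. real (visit_count s a t \<omega> x y)) \<in> borel_measurable M"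
  "(\<lambda>\<omega>. emp_reward s a r t \<omega> x y) \<in> borel_measurable M"
  "(\<lambda>\<omega>. emp_trans s a t \<omega> x y x') \<in> borel_measurable M"
  unfolding emp_reward_eq_sampled_sum emp_trans_eq_sampled_sum sample_count_visits[symmetric]
  by (intro borel_measurable_divide borel_measurable_max borel_measurable_const
      measurable_sampled_noise measurable_sampled_sum_visits; measurable)+

lemma sets_plausible_event:
  "{\<omega> \<in> space M. \<forall>t\<in>{1..T}. \<forall>\<tau>\<in>{1..T}.
      in_plausible \<delta> Vr Vp s a r t \<omega> (rbar \<tau>) (p \<tau>)} \<in> sets M"
  unfolding in_plausible_def
  by (intro sets.sets_Collect_countable_Ball sets.sets_Collect_countable_All sets.sets_Collect_conj
      borel_measurable_le borel_measurable_abs borel_measurable_diff borel_measurable_add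
      borel_measurable_sum borel_measurable_const measurable_empirical
      measurable_compose[OF _ borel_measurable_sqrt] borel_measurable_divide borel_measurable_max)

lemma sets_deviation_events [measurable]:
  "reward_deviation_event \<delta> t x y n \<in> sets M" "transition_deviation_event \<delta> t x y n B \<in> sets M"
  unfolding reward_deviation_event_def transition_deviation_event_def
  by (intro sets.sets_Collect_conj borel_measurable_eq borel_measurable_le borel_measurable_abs
      borel_measurable_const measurable_sampled_noise)+

lemma sets_bad_event [measurable]: "bad_event \<delta> t x y n \<in> sets M"
  unfolding bad_event_def by (intro sets.Un sets.finite_UN sets_deviation_events) auto

lemma square_mult_sqrt_div:
  fixes n z :: real
  assumes "0 < n" and "0 \<le> z"
  shows "(n * sqrt (z / n))\<^sup>2 = z * n"
proof -
  have "(n * sqrt (z / n))\<^sup>2 = n\<^sup>2 * (z / n)"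
    using assms by (simp add: power_mult_distrib)
  also have "\<dots> = z * n"
    using assms by (simp add: power2_eq_square)
  finally show ?thesis .
qed

lemma prob_reward_deviation_event_le:
  assumes "0 < \<delta>" and "\<delta> \<le> 1" and "1 \<le> t" and "1 \<le> n"
  shows "prob (reward_deviation_event \<delta> t x y n) \<le> 2 * exp (- conf_log \<delta> t) ^ 4"
proof -
  interpret R: sampled_increments M hist "visits x y" reward_noise 1
    by (rule sampled_increments_reward)
  have L: "1 \<le> conf_log \<delta> t"
    using conf_log_ge_1 assms by simp
  have "prob (reward_deviation_event \<delta> t x y n)
      \<le> 2 * exp (- ((n * sqrt (8 * conf_log \<delta> t / n))\<^sup>2 / (2 * 1\<^sup>2 * real n)))"
    unfolding reward_deviation_event_def using assms L by (intro R.prob_abs_sampled_sum_ge) auto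
  also have "\<dots> = 2 * exp (- conf_log \<delta> t) ^ 4"
    using assms L by (simp add: square_mult_sqrt_div flip: exp_of_nat_mult)
  finally show ?thesis .
qed

lemma prob_transition_deviation_event_le:
  assumes "0 < \<delta>" and "\<delta> \<le> 1" and "1 \<le> t" and "1 \<le> n"
  shows "prob (transition_deviation_event \<delta> t x y n B) \<le> exp (- conf_log \<delta> t) ^ CARD('s)"
proof -
  interpret P: sampled_increments M hist "visits x y" "transition_noise B" 2
    by (rule sampled_increments_transition)
  have L: "1 \<le> conf_log \<delta> t"
    using conf_log_ge_1 assms by simp
  have "prob (transition_deviation_event \<delta> t x y n B)
      \<le> exp (- ((n * sqrt (8 * CARD('s) * conf_log \<delta> t / n))\<^sup>2 / (2 * 2\<^sup>2 * real n)))"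
    unfolding transition_deviation_event_def using assms L by (intro P.prob_sampled_sum_ge) auto
  also have "\<dots> = exp (- conf_log \<delta> t) ^ CARD('s)"
    using assms L by (simp add: square_mult_sqrt_div flip: exp_of_nat_mult)
  finally show ?thesis .
qed

lemma prob_bad_event_le:
  assumes "0 < \<delta>" and "\<delta> \<le> 1" and "1 \<le> t" and "1 \<le> n"
  shows "prob (bad_event \<delta> t x y n) \<le> \<delta> / (2 * real CARD('s) * real CARD('a) * real t ^ 3)"
proof -
  define W where "W = exp (- conf_log \<delta> t)"
  have W: "0 \<le> W" "W \<le> 1 / 8"
    unfolding W_def exp_neg_conf_log[OF assms(1,3)]
    using assms eight_le_conf_arg[OF assms(1-3)] by (simp_all add: divide_le_eq field_simps)
  have "prob (bad_event \<delta> t x y n)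
      \<le> prob (reward_deviation_event \<delta> t x y n) + (\<Sum>B\<in>UNIV. prob (transition_deviation_event \<delta> t x y n B))"
    unfolding bad_event_def by (intro order_trans[OF measure_Un_le] add_left_mono measure_UNION_le) auto
  also have "\<dots> \<le> 2 * W ^ 4 + (\<Sum>B\<in>(UNIV :: 's set set). W ^ CARD('s))"
    unfolding W_def using assms
    by (intro add_mono sum_mono prob_reward_deviation_event_le prob_transition_deviation_event_le)
  also have "\<dots> = 2 * W ^ 4 + (2 * W) ^ CARD('s)"
    by (simp add: card_UNIV_set power_mult_distrib)
  also have "\<dots> \<le> 2 * W + 2 * W"
    using W by (intro add_mono mult_left_mono power_decreasing[where n = 1, simplified]
        power_le_one) (auto simp: Suc_le_eq)
  also have "\<dots> = \<delta> / (2 * real CARD('s) * real CARD('a) * real t ^ 3)"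
    unfolding W_def exp_neg_conf_log[OF assms(1,3)] by simp
  finally show ?thesis .
qed

lemma prob_bad_events_le:
  assumes "0 < \<delta>" and "\<delta> \<le> 1"
  shows "prob (\<Union>t\<in>{1..T}. \<Union>x. \<Union>y. \<Union>n\<in>{1..<t}. bad_event \<delta> t x y n) \<le> \<delta> / 2"
proof -
  have "prob (\<Union>x. \<Union>y. \<Union>n\<in>{1..<t}. bad_event \<delta> t x y n) \<le> \<delta> / 2 * ((real t - 1) / real t ^ 3)"
    if t: "t \<in> {1..T}" for t
  proof -
    have "prob (\<Union>x. \<Union>y. \<Union>n\<in>{1..<t}. bad_event \<delta> t x y n)
        \<le> (\<Sum>x\<in>(UNIV :: 's set). \<Sum>y\<in>(UNIV :: 'a set). \<Sum>n\<in>{1..<t}. \<delta> / (2 * real CARD('s) * real CARD('a) * real t ^ 3))"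
      using assms t by (intro measure_UNION_le_sum prob_bad_event_le) (auto intro!: sets.finite_UN)
    also have "\<dots> = \<delta> / 2 * ((real t - 1) / real t ^ 3)"
      using t by (simp add: of_nat_diff)
    finally show ?thesis .
  qed
  then have "prob (\<Union>t\<in>{1..T}. \<Union>x. \<Union>y. \<Union>n\<in>{1..<t}. bad_event \<delta> t x y n)
      \<le> (\<Sum>t\<in>{1..T}. \<delta> / 2 * ((real t - 1) / real t ^ 3))"
    by (intro measure_UNION_le_sum) (auto intro!: sets.finite_UN)
  also have "\<dots> = \<delta> / 2 * (\<Sum>t\<in>{1..T}. (real t - 1) / real t ^ 3)"
    by (simp add: sum_distrib_left)
  also have "\<dots> \<le> \<delta> / 2 * 1"
    using sum_cube_ratio_le_1 assms by (intro mult_left_mono) auto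
  finally show ?thesis
    by simp
qed

theorem prob_all_models_plausible:
  assumes "0 < \<delta>" and "\<delta> \<le> 1"
  shows "1 - \<delta> / 2 \<le> prob {\<omega> \<in> space M. \<forall>t\<in>{1..T}. \<forall>\<tau>\<in>{1..T}.
           in_plausible \<delta> (reward_variation rbar T) (trans_variation p T) s a r t \<omega> (rbar \<tau>) (p \<tau>)}"
proof -
  define Bad where "Bad = (\<Union>t\<in>{1..T}. \<Union>x. \<Union>y. \<Union>n\<in>{1..<t}. bad_event \<delta> t x y n)"
  have "Bad \<in> sets M"
    unfolding Bad_def by (auto intro!: sets.finite_UN)
  have "space M - Bad \<subseteq> {\<omega> \<in> space M. \<forall>t\<in>{1..T}. \<forall>\<tau>\<in>{1..T}.
           in_plausible \<delta> (reward_variation rbar T) (trans_variation p T) s a r t \<omega> (rbar \<tau>) (p \<tau>)}"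
    using assms by (auto simp: Bad_def intro!: in_plausible_outside_bad_events)
  then have "prob (space M - Bad) \<le> prob {\<omega> \<in> space M. \<forall>t\<in>{1..T}. \<forall>\<tau>\<in>{1..T}.
           in_plausible \<delta> (reward_variation rbar T) (trans_variation p T) s a r t \<omega> (rbar \<tau>) (p \<tau>)}"
    by (intro finite_measure_mono sets_plausible_event)
  moreover have "1 - \<delta> / 2 \<le> prob (space M - Bad)"
    using prob_compl[OF \<open>Bad \<in> sets M\<close>] prob_bad_events_le[OF assms] by (simp add: Bad_def)
  ultimately show ?thesis
    by linarith
qed

end

theorem lemma4:
  fixes M :: "'w measure"
    and s :: "nat \<Rightarrow> 'w \<Rightarrow> 's::finite"
    and a :: "nat \<Rightarrow> 'w \<Rightarrow> 'a::finite"
    and r :: "nat \<Rightarrow> 'w \<Rightarrow> real"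
    and rbar :: "nat \<Rightarrow> 's \<Rightarrow> 'a \<Rightarrow> real"
    and p :: "nat \<Rightarrow> 's \<Rightarrow> 'a \<Rightarrow> 's pmf"
    and s1 :: 's and T :: nat and \<delta> :: real
  assumes "prob_space M"
    and "T \<ge> 1" and "0 < \<delta>" and "\<delta> < 1"
    and "\<forall>t x y. rbar t x y \<in> {0..1}"
    and "\<forall>t. s t \<in> measurable M (count_space UNIV)"
    and "\<forall>t. r t \<in> borel_measurable M"
    and "\<forall>t. \<forall>\<omega>\<in>space M. r t \<omega> \<in> {0..1}"
    and "\<forall>\<omega>\<in>space M. s 1 \<omega> = s1"
    and "\<forall>t\<ge>1. a t \<in> measurable (hist_alg M s a r t) (count_space UNIV)"
    and "\<forall>t\<ge>1. \<forall>E\<in>sets (hist_alg M s a r t).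
           (\<integral>\<omega>. indicator E \<omega> * r t \<omega> \<partial>M) = (\<integral>\<omega>. indicator E \<omega> * rbar t (s t \<omega>) (a t \<omega>) \<partial>M)"
    and "\<forall>t\<ge>1. \<forall>E\<in>sets (hist_alg M s a r t). \<forall>x.
           measure M (E \<inter> {\<omega> \<in> space M. s (Suc t) \<omega> = x})
             = (\<integral>\<omega>. indicator E \<omega> * pmf (p t (s t \<omega>) (a t \<omega>)) x \<partial>M)"
  shows "measure M {\<omega> \<in> space M. \<forall>t\<in>{1..T}. \<forall>\<tau>\<in>{1..T}.
            in_plausible \<delta> (reward_variation rbar T) (trans_variation p T) s a r t \<omega> (rbar \<tau>) (p \<tau>)}
         \<ge> 1 - 5 * \<delta> / 6"
proof -
  interpret mdp_trajectory M s a r rbar p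
    by (rule mdp_trajectory.intro[OF assms(1)], unfold_locales) (use assms in blast)+
  have "1 - 5 * \<delta> / 6 \<le> 1 - \<delta> / 2"
    using \<open>0 < \<delta>\<close> by simp
  also have "\<dots> \<le> prob {\<omega> \<in> space M. \<forall>t\<in>{1..T}. \<forall>\<tau>\<in>{1..T}.
      in_plausible \<delta> (reward_variation rbar T) (trans_variation p T) s a r t \<omega> (rbar \<tau>) (p \<tau>)}"
    using \<open>0 < \<delta>\<close> \<open>\<delta> < 1\<close> by (intro prob_all_models_plausible) auto
  finally show ?thesis .
qed

end
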